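(* Define: - $I:{}_H\mathcal M\to\mathbb T({}_H\mathcal M)$ by $I(M)=(M,\mathrm{id}_M)$ and $I(f)=f$; - $R:\mathbb T({}_H\mathcal M)\to{}_H\mathcal M^{par}$ by $R(M,T)=(T(M),\pi_{T})$, where $\pi_{T}(h)(m)=T(h\triangleright m)$ for $m\in T(M)$, and $R(f)=f$ on morphisms. Then $I$ and $R$ are fully faithful functors, and the inclusion functor $i:{}_H\mathcal M\to{}_H\mathcal M^{par}$ equals the composite $R\circ I$.
   Context: Throughout, $k$ is a field and $H$ is a Hopf algebra over $k$ with bijective antipode $S$ and Sweedler notation $\Delta(h)=h_{(1)}\otimes h_{(2)}$. A partial $H$-module is a vector space $M$ with linear $\pi:H\to\mathrm{End}_k(M)$ satisfying, for all $h,k\in H$: - $\pi(1_H)=\mathrm{id}$; - $\pi(h)\pi(k_{(1)})\pi(S(k_{(2)}))=\pi(hk_{(1)})\pi(S(k_{(2)}))$; - $\pi(h_{(1)})\pi(S(h_{(2)}))\pi(k)=\pi(h_{(1)})\pi(S(h_{(2)})k)$; - $\pi(h)\pi(S(k_{(1)}))\pi(k_{(2)})=\pi(hS(k_{(1)}))\pi(k_{(2)})$; - $\pi(S(h_{(1)}))\pi(h_{(2)})\pi(k)=\pi(S(h_{(1)}))\pi(h_{(2)}k)$. Morphisms of partial $H$-modules are linear maps commuting with all $\pi(h)$; they form the category ${}_H\mathcal M^{par}$. The inclusion $i$ regards a left $H$-module $M$ as the partial module $\pi(h)(m)=h\triangleright m$. For a left $H$-module $M$ and a linear projection $T$, put $T_h(m)=h_{(1)}\triangleright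 T(S(h_{(2)})\triangleright m)$. $T$ satisfies the c-condition if $T_h\circ T=T\circ T_h$ for all $h$. The category $\mathbb T({}_H\mathcal M)$ is defined as follows: - objects are pairs $(M,T)$ with $M$ a left $H$-module and $T$ a projection satisfying the c-condition; - morphisms $(M,T)\to(N,S)$ are linear maps $f:T(M)\to S(N)$ with $f(T(h\triangleright m))=S(h\triangleright f(m))$ for all $h\in H$, $m\in T(M)$. *)

theory Defs
  imports Complex_Main
begin

text \<open>
  An element of H (x) H is represented by a finite list of pairs (a,b), standing for
  the sum of the a (x) b.  Two such lists represent the same tensor iff they agree under
  all pairs (resp. triples) of linear functionals H -> k (over a field this characterises
  equality in the tensor product).  The comultiplication is a function returning such a
  Sweedler list; the lists are only ever used through expressions which are linear in the
  tensor, so the choice of representative is immaterial.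
\<close>

definition tens2 :: "('h \<Rightarrow> 'k::comm_ring_1) \<Rightarrow> ('h \<Rightarrow> 'k) \<Rightarrow> ('h \<times> 'h) list \<Rightarrow> 'k" where
  "tens2 f g t = sum_list (map (\<lambda>(a, b). f a * g b) t)"

definition tens3 :: "('h \<Rightarrow> 'k::comm_ring_1) \<Rightarrow> ('h \<Rightarrow> 'k) \<Rightarrow> ('h \<Rightarrow> 'k)
    \<Rightarrow> ('h \<times> 'h \<times> 'h) list \<Rightarrow> 'k" where
  "tens3 f g l t = sum_list (map (\<lambda>(a, b, c). f a * g b * l c) t)"

definition teq2 :: "('k::field \<Rightarrow> 'h::ab_group_add \<Rightarrow> 'h) \<Rightarrow> ('h \<times> 'h) list \<Rightarrow> ('h \<times> 'h) list \<Rightarrow> bool" where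
  "teq2 sH t u \<longleftrightarrow> (\<forall>f g. Vector_Spaces.linear sH (*) f \<longrightarrow> Vector_Spaces.linear sH (*) g
      \<longrightarrow> tens2 f g t = tens2 f g u)"

definition teq3 :: "('k::field \<Rightarrow> 'h::ab_group_add \<Rightarrow> 'h) \<Rightarrow> ('h \<times> 'h \<times> 'h) list
    \<Rightarrow> ('h \<times> 'h \<times> 'h) list \<Rightarrow> bool" where
  "teq3 sH t u \<longleftrightarrow> (\<forall>f g l. Vector_Spaces.linear sH (*) f \<longrightarrow> Vector_Spaces.linear sH (*) g
      \<longrightarrow> Vector_Spaces.linear sH (*) l \<longrightarrow> tens3 f g l t = tens3 f g l u)"

definition hopf_algebra :: "('k::field \<Rightarrow> 'h::ring_1 \<Rightarrow> 'h) \<Rightarrow> ('h \<Rightarrow> ('h \<times> 'h) list)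
    \<Rightarrow> ('h \<Rightarrow> 'k) \<Rightarrow> ('h \<Rightarrow> 'h) \<Rightarrow> bool" where
  "hopf_algebra sH \<Delta> \<epsilon> S \<longleftrightarrow>
     vector_space sH \<and>
     (\<forall>c x y. sH c (x * y) = sH c x * y \<and> sH c (x * y) = x * sH c y) \<and>
     \<comment> \<open>comultiplication is linear\<close>
     (\<forall>c x y. teq2 sH (\<Delta> (sH c x + y)) (map (\<lambda>(a, b). (sH c a, b)) (\<Delta> x) @ \<Delta> y)) \<and>
     \<comment> \<open>coassociativity\<close>
     (\<forall>h. teq3 sH [(a1, a2, b). (a, b) \<leftarrow> \<Delta> h, (a1, a2) \<leftarrow> \<Delta> a]
                    [(a, b1, b2). (a, b) \<leftarrow> \<Delta> h, (b1, b2) \<leftarrow> \<Delta> b]) \<and>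
     \<comment> \<open>counit\<close>
     Vector_Spaces.linear sH (*) \<epsilon> \<and>
     (\<forall>h. sum_list (map (\<lambda>(a, b). sH (\<epsilon> a) b) (\<Delta> h)) = h \<and>
          sum_list (map (\<lambda>(a, b). sH (\<epsilon> b) a) (\<Delta> h)) = h) \<and>
     \<comment> \<open>bialgebra: comultiplication and counit are algebra maps\<close>
     (\<forall>x y. teq2 sH (\<Delta> (x * y)) [(a * c, b * d). (a, b) \<leftarrow> \<Delta> x, (c, d) \<leftarrow> \<Delta> y]) \<and>
     teq2 sH (\<Delta> 1) [(1, 1)] \<and>
     (\<forall>x y. \<epsilon> (x * y) = \<epsilon> x * \<epsilon> y) \<and> \<epsilon> 1 = 1 \<and>
     \<comment> \<open>antipode\<close>
     Vector_Spaces.linear sH sH S \<and>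
     (\<forall>h. sum_list (map (\<lambda>(a, b). S a * b) (\<Delta> h)) = sH (\<epsilon> h) 1 \<and>
          sum_list (map (\<lambda>(a, b). a * S b) (\<Delta> h)) = sH (\<epsilon> h) 1) \<and>
     \<comment> \<open>standing assumption: bijective antipode\<close>
     bij S"

definition hmodule :: "('k::field \<Rightarrow> 'h::ring_1 \<Rightarrow> 'h) \<Rightarrow> ('k \<Rightarrow> 'm::ab_group_add \<Rightarrow> 'm)
    \<Rightarrow> ('h \<Rightarrow> 'm \<Rightarrow> 'm) \<Rightarrow> bool" where
  "hmodule sH sM act \<longleftrightarrow>
     vector_space sM \<and>
     (\<forall>h. Vector_Spaces.linear sM sM (act h)) \<and>
     (\<forall>c h k m. act (sH c h + k) m = sM c (act h m) + act k m) \<and>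
     (\<forall>m. act 1 m = m) \<and>
     (\<forall>h k m. act (h * k) m = act h (act k m))"

definition mhom :: "('k::field \<Rightarrow> 'm::ab_group_add \<Rightarrow> 'm) \<Rightarrow> ('h \<Rightarrow> 'm \<Rightarrow> 'm)
    \<Rightarrow> ('k \<Rightarrow> 'n::ab_group_add \<Rightarrow> 'n) \<Rightarrow> ('h \<Rightarrow> 'n \<Rightarrow> 'n) \<Rightarrow> ('m \<Rightarrow> 'n) \<Rightarrow> bool" where
  "mhom sM actM sN actN f \<longleftrightarrow>
     Vector_Spaces.linear sM sN f \<and> (\<forall>h m. f (actM h m) = actN h (f m))"

definition lin_on :: "('k \<Rightarrow> 'm::ab_group_add \<Rightarrow> 'm) \<Rightarrow> ('k \<Rightarrow> 'n::ab_group_add \<Rightarrow> 'n)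
    \<Rightarrow> 'm set \<Rightarrow> ('m \<Rightarrow> 'n) \<Rightarrow> bool" where
  "lin_on sM sN V f \<longleftrightarrow> (\<forall>c. \<forall>x\<in>V. \<forall>y\<in>V. f (sM c x + y) = sN c (f x) + f y)"

definition par_module :: "('k::field \<Rightarrow> 'h::ring_1 \<Rightarrow> 'h) \<Rightarrow> ('h \<Rightarrow> ('h \<times> 'h) list)
    \<Rightarrow> ('h \<Rightarrow> 'h) \<Rightarrow> ('k \<Rightarrow> 'm::ab_group_add \<Rightarrow> 'm) \<Rightarrow> 'm set \<times> ('h \<Rightarrow> 'm \<Rightarrow> 'm) \<Rightarrow> bool" where
  "par_module sH \<Delta> S sM P \<longleftrightarrow>
     (case P of (V, \<pi>) \<Rightarrow>
       vector_space sM \<and> module.subspace sM V \<and>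
       (\<forall>h. \<forall>m\<in>V. \<pi> h m \<in> V) \<and>
       (\<forall>h. lin_on sM sM V (\<pi> h)) \<and>
       (\<forall>c h k. \<forall>m\<in>V. \<pi> (sH c h + k) m = sM c (\<pi> h m) + \<pi> k m) \<and>
       (\<forall>m\<in>V. \<pi> 1 m = m) \<and>
       (\<forall>h k. \<forall>m\<in>V. sum_list (map (\<lambda>(a, b). \<pi> h (\<pi> a (\<pi> (S b) m))) (\<Delta> k))
                   = sum_list (map (\<lambda>(a, b). \<pi> (h * a) (\<pi> (S b) m)) (\<Delta> k))) \<and>
       (\<forall>h k. \<forall>m\<in>V. sum_list (map (\<lambda>(a, b). \<pi> a (\<pi> (S b) (\<pi> k m))) (\<Delta> h))
                   = sum_list (map (\<lambda>(a, b). \<pi> a (\<pi> (S b * k) m)) (\<Delta> h))) \<and>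
       (\<forall>h k. \<forall>m\<in>V. sum_list (map (\<lambda>(a, b). \<pi> h (\<pi> (S a) (\<pi> b m))) (\<Delta> k))
                   = sum_list (map (\<lambda>(a, b). \<pi> (h * S a) (\<pi> b m)) (\<Delta> k))) \<and>
       (\<forall>h k. \<forall>m\<in>V. sum_list (map (\<lambda>(a, b). \<pi> (S a) (\<pi> b (\<pi> k m))) (\<Delta> h))
                   = sum_list (map (\<lambda>(a, b). \<pi> (S a) (\<pi> (b * k) m)) (\<Delta> h))))"

text \<open>Morphisms of partial modules (V, pi) -> (W, rho): linear maps V -> W commuting with
  the partial actions.  Two morphisms are equal iff they agree on V.\<close>
definition par_hom :: "('k \<Rightarrow> 'm::ab_group_add \<Rightarrow> 'm) \<Rightarrow> ('k \<Rightarrow> 'n::ab_group_add \<Rightarrow> 'n)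
    \<Rightarrow> 'm set \<times> ('h \<Rightarrow> 'm \<Rightarrow> 'm) \<Rightarrow> 'n set \<times> ('h \<Rightarrow> 'n \<Rightarrow> 'n) \<Rightarrow> ('m \<Rightarrow> 'n) \<Rightarrow> bool" where
  "par_hom sM sN P Q f \<longleftrightarrow>
     (\<forall>m\<in>fst P. f m \<in> fst Q) \<and> lin_on sM sN (fst P) f \<and>
     (\<forall>h. \<forall>m\<in>fst P. f (snd P h m) = snd Q h (f m))"

definition Tc :: "('h::ring_1 \<Rightarrow> ('h \<times> 'h) list) \<Rightarrow> ('h \<Rightarrow> 'h) \<Rightarrow> ('h \<Rightarrow> 'm \<Rightarrow> 'm)
    \<Rightarrow> ('m::ab_group_add \<Rightarrow> 'm) \<Rightarrow> 'h \<Rightarrow> 'm \<Rightarrow> 'm" where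
  "Tc \<Delta> S act T h m = sum_list (map (\<lambda>(a, b). act a (T (act (S b) m))) (\<Delta> h))"

definition c_condition :: "('h::ring_1 \<Rightarrow> ('h \<times> 'h) list) \<Rightarrow> ('h \<Rightarrow> 'h) \<Rightarrow> ('h \<Rightarrow> 'm \<Rightarrow> 'm)
    \<Rightarrow> ('m::ab_group_add \<Rightarrow> 'm) \<Rightarrow> bool" where
  "c_condition \<Delta> S act T \<longleftrightarrow> (\<forall>h m. Tc \<Delta> S act T h (T m) = T (Tc \<Delta> S act T h m))"

definition tobj :: "('k::field \<Rightarrow> 'h::ring_1 \<Rightarrow> 'h) \<Rightarrow> ('h \<Rightarrow> ('h \<times> 'h) list) \<Rightarrow> ('h \<Rightarrow> 'h)
    \<Rightarrow> ('k \<Rightarrow> 'm::ab_group_add \<Rightarrow> 'm) \<Rightarrow> ('h \<Rightarrow> 'm \<Rightarrow> 'm) \<times> ('m \<Rightarrow> 'm) \<Rightarrow> bool" where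
  "tobj sH \<Delta> S sM X \<longleftrightarrow>
     (case X of (act, T) \<Rightarrow>
        hmodule sH sM act \<and> Vector_Spaces.linear sM sM T \<and> (\<forall>m. T (T m) = T m) \<and>
        c_condition \<Delta> S act T)"

text \<open>Morphisms (M,T) -> (N,T'): linear maps f : T(M) -> T'(N) with
  f (T (h . m)) = T' (h . f m) for m in T(M).  Two morphisms are equal iff they agree on T(M).\<close>
definition thom :: "('k \<Rightarrow> 'm::ab_group_add \<Rightarrow> 'm) \<Rightarrow> ('k \<Rightarrow> 'n::ab_group_add \<Rightarrow> 'n)
    \<Rightarrow> ('h \<Rightarrow> 'm \<Rightarrow> 'm) \<times> ('m \<Rightarrow> 'm) \<Rightarrow> ('h \<Rightarrow> 'n \<Rightarrow> 'n) \<times> ('n \<Rightarrow> 'n) \<Rightarrow> ('m \<Rightarrow> 'n) \<Rightarrow> bool" where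
  "thom sM sN X Y f \<longleftrightarrow>
     (\<forall>m\<in>range (snd X). f m \<in> range (snd Y)) \<and> lin_on sM sN (range (snd X)) f \<and>
     (\<forall>h. \<forall>m\<in>range (snd X). f (snd X (fst X h m)) = snd Y (fst Y h (f m)))"

definition I_obj :: "('h \<Rightarrow> 'm \<Rightarrow> 'm) \<Rightarrow> ('h \<Rightarrow> 'm \<Rightarrow> 'm) \<times> ('m \<Rightarrow> 'm)" where
  "I_obj act = (act, id)"

definition I_mor :: "('m \<Rightarrow> 'n) \<Rightarrow> ('m \<Rightarrow> 'n)" where
  "I_mor f = f"

definition R_obj :: "('h \<Rightarrow> 'm \<Rightarrow> 'm) \<times> ('m \<Rightarrow> 'm) \<Rightarrow> 'm set \<times> ('h \<Rightarrow> 'm \<Rightarrow> 'm)" where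
  "R_obj X = (range (snd X), \<lambda>h m. snd X (fst X h m))"

definition R_mor :: "('m \<Rightarrow> 'n) \<Rightarrow> ('m \<Rightarrow> 'n)" where
  "R_mor f = f"

definition i_obj :: "('h \<Rightarrow> 'm \<Rightarrow> 'm) \<Rightarrow> 'm set \<times> ('h \<Rightarrow> 'm \<Rightarrow> 'm)" where
  "i_obj act = (UNIV, act)"

definition i_mor :: "('m \<Rightarrow> 'n) \<Rightarrow> ('m \<Rightarrow> 'n)" where
  "i_mor f = f"

end

theory Submission
  imports Defs
begin

text \<open>
  For T = id a morphism of T(_H M) is exactly an
  H-module map, and a morphism (M,T) \<rightarrow> (N,T') is literally the same data as a morphism of
  the partial modules R(M,T) \<rightarrow> R(N,T'); so functoriality and full faithfulness are
  immediate, and the content is that R(M,T) satisfies the partial module axioms.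
  The first two follow from the c-condition T T_h = T_h T. The other two need the twin
  identity T T'_h = T'_h T for T'_h m = S(h_1) T(h_2 m), which follows from the c-condition
  by expanding h T(m) = T_{h_1}(h_2 m) and using coassociativity and the antipode.
  Since tensor identities are only known after applying linear functionals, they are
  evaluated on multilinear maps by expanding every tensor entry in a basis.
\<close>

lemma linear_map_add: "Vector_Spaces.linear s1 s2 f \<Longrightarrow> f (x + y) = f x + f y"
  by (simp add: Vector_Spaces.linear_iff)

lemma linear_map_scale: "Vector_Spaces.linear s1 s2 f \<Longrightarrow> f (s1 c x) = s2 c (f x)"
  by (simp add: Vector_Spaces.linear_iff)

lemma linear_map_zero: "Vector_Spaces.linear s1 s2 f \<Longrightarrow> f 0 = 0"
  by (simp add: module_hom.zero linear_iff_module_hom)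

lemma linear_map_sum: "Vector_Spaces.linear s1 s2 f \<Longrightarrow> f (sum g A) = (\<Sum>x\<in>A. f (g x))"
  by (simp add: module_hom.sum linear_iff_module_hom)

lemma linear_map_sum_list:
  "Vector_Spaces.linear s1 s2 f \<Longrightarrow>
   f (sum_list (map (\<lambda>(a, b). g a b) xs)) = sum_list (map (\<lambda>(a, b). f (g a b)) xs)"
  by (induction xs) (auto simp: linear_map_zero linear_map_add)

lemma linear_comp:
  "Vector_Spaces.linear s1 s2 f \<Longrightarrow> Vector_Spaces.linear s2 s3 g \<Longrightarrow>
   Vector_Spaces.linear s1 s3 (\<lambda>x. g (f x))"
  using Vector_Spaces.linear_compose[of s1 s2 f s3 g] by (simp add: o_def)

lemma linear_if_combination:
  assumes v1: "vector_space s1" and v2: "vector_space s2"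
    and comb: "\<And>c x y. f (s1 c x + y) = s2 c (f x) + f y"
  shows "Vector_Spaces.linear s1 s2 f"
proof -
  have one1: "s1 1 x = x" and one2: "s2 1 y = y" for x y
    using v1 v2 by (simp_all add: vector_space_def module.scale_one)
  have "f 0 = f 0 + f 0" using comb[of 1 0 0] by (simp add: one1 one2)
  then have "f 0 = 0" by simp
  then show ?thesis
    using v1 v2 comb[of 1] comb[where y = 0] by (simp add: Vector_Spaces.linear_iff one1 one2)
qed

lemma (in vector_space) sum_list_scale_left:
  "sum_list (map (\<lambda>p. scale (c p) v) xs) = scale (sum_list (map c xs)) v"
  by (induction xs) (simp_all add: scale_left_distrib)

lemma (in vector_space) scale_sum_list:
  "scale c (sum_list (map (\<lambda>(a, b). g a b) xs)) = sum_list (map (\<lambda>(a, b). scale c (g a b)) xs)"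
  by (induction xs) (auto simp: scale_right_distrib)

lemma linear_sum_list_fun:
  assumes v1: "vector_space s1" and v2: "vector_space s2"
    and G: "\<And>a b. Vector_Spaces.linear s1 s2 (G a b)"
  shows "Vector_Spaces.linear s1 s2 (\<lambda>z. sum_list (map (\<lambda>(a, b). G a b z) xs))"
proof -
  have "sum_list (map (\<lambda>(a, b). G a b (x + y)) xs)
      = sum_list (map (\<lambda>(a, b). G a b x) xs) + sum_list (map (\<lambda>(a, b). G a b y) xs)" for x y
    by (induction xs) (auto simp: linear_map_add[OF G])
  then show ?thesis
    using v1 v2
    by (simp add: Vector_Spaces.linear_iff vector_space.scale_sum_list linear_map_scale[OF G])
qed

lemma sum_list_map_sum:
  "sum_list (map (\<lambda>p. \<Sum>e\<in>E. F e p) xs) = (\<Sum>e\<in>E. sum_list (map (F e) xs))"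
  by (induction xs) (simp_all add: sum.distrib)

lemma (in vector_space) finite_coordinates:
  assumes "finite X"
  obtains E g where "finite E" "\<And>e. Vector_Spaces.linear scale (*) (g e)"
    "\<And>x. x \<in> X \<Longrightarrow> x = (\<Sum>e\<in>E. scale (g e x) e)"
proof -
  define C where "C = extend_basis {}"
  have iC: "independent C" and sC: "span C = UNIV"
    unfolding C_def using independent_extend_basis span_extend_basis independent_empty by auto
  define E where "E = (\<Union>x\<in>X. {b. representation C x b \<noteq> 0})"
  have fE: "finite E" unfolding E_def using assms finite_representation by auto
  show ?thesis
  proof (rule that[of E "\<lambda>e v. representation C v e"])
    show "Vector_Spaces.linear scale (*) (\<lambda>v. representation C v e)" for e
      using linear_representation[OF iC sC] .
    fix x assume x: "x \<in> X"
    have "x = (\<Sum>b | representation C x b \<noteq> 0. scale (representation C x b) b)"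
      using sum_nonzero_representation_eq[OF iC] sC by simp
    also have "\<dots> = (\<Sum>b\<in>E. scale (representation C x b) b)"
      by (rule sum.mono_neutral_left) (use fE x in \<open>auto simp: E_def\<close>)
    finally show "x = (\<Sum>e\<in>E. scale (representation C x e) e)" .
  qed (rule fE)
qed

lemma linear_map_coordinates:
  assumes "Vector_Spaces.linear s1 s2 f" "x = (\<Sum>e\<in>E. s1 (g e) e)"
  shows "f x = (\<Sum>e\<in>E. s2 (g e) (f e))"
  using assms by (simp add: linear_map_sum linear_map_scale)

lemma teq2_sum_list_bilinear:
  assumes vH: "vector_space sH" and vV: "vector_space sV" and t: "teq2 sH t u"
    and B1: "\<And>y. Vector_Spaces.linear sH sV (\<lambda>x. B x y)"
    and B2: "\<And>x. Vector_Spaces.linear sH sV (B x)"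
  shows "sum_list (map (\<lambda>(a, b). B a b) t) = sum_list (map (\<lambda>(a, b). B a b) u)"
proof -
  have mV: "module sV" using vV by (simp add: module_iff_vector_space)
  define X where "X = (\<Union>(a, b)\<in>set t \<union> set u. {a, b})"
  have "finite X" unfolding X_def by auto
  then obtain E g where lg: "\<And>e. Vector_Spaces.linear sH (*) (g e)"
    and ex: "\<And>x. x \<in> X \<Longrightarrow> x = (\<Sum>e\<in>E. sH (g e x) e)"
    by (rule vector_space.finite_coordinates[OF vH]) blast
  have expand: "(\<lambda>(a, b). B a b) p = (\<Sum>e\<in>E. \<Sum>e'\<in>E. sV (g e (fst p) * g e' (snd p)) (B e e'))"
    if pX: "p \<in> X \<times> X" for p
  proof -
    obtain a b where p: "p = (a, b)" "a \<in> X" "b \<in> X" using pX by auto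
    have "B a b = (\<Sum>e\<in>E. sV (g e a) (B e b))"
      by (rule linear_map_coordinates[OF B1 ex[OF p(2)]])
    also have "\<dots> = (\<Sum>e\<in>E. sV (g e a) (\<Sum>e'\<in>E. sV (g e' b) (B e e')))"
      by (simp only: linear_map_coordinates[OF B2 ex[OF p(3)]])
    finally show ?thesis
      by (simp add: p(1) module.scale_sum_right[OF mV] module.scale_scale[OF mV])
  qed
  have "sum_list (map (\<lambda>(a, b). B a b) l) = (\<Sum>e\<in>E. \<Sum>e'\<in>E. sV (tens2 (g e) (g e') l) (B e e'))"
    if "set l \<subseteq> set t \<union> set u" for l
  proof -
    have "set l \<subseteq> X \<times> X" using that unfolding X_def by fastforce
    then have "sum_list (map (\<lambda>(a, b). B a b) l)
        = sum_list (map (\<lambda>p. \<Sum>e\<in>E. \<Sum>e'\<in>E. sV (g e (fst p) * g e' (snd p)) (B e e')) l)"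
      by (intro arg_cong[where f = sum_list] map_cong refl expand) blast
    also have "\<dots> = (\<Sum>e\<in>E. \<Sum>e'\<in>E. sV (tens2 (g e) (g e') l) (B e e'))"
      by (simp add: sum_list_map_sum vector_space.sum_list_scale_left[OF vV] tens2_def split_def)
    finally show ?thesis .
  qed
  then show ?thesis using t lg unfolding teq2_def by simp
qed

lemma teq3_sum_list_trilinear:
  assumes vH: "vector_space sH" and vV: "vector_space sV" and t: "teq3 sH t u"
    and B1: "\<And>y z. Vector_Spaces.linear sH sV (\<lambda>x. B x y z)"
    and B2: "\<And>x z. Vector_Spaces.linear sH sV (\<lambda>y. B x y z)"
    and B3: "\<And>x y. Vector_Spaces.linear sH sV (B x y)"
  shows "sum_list (map (\<lambda>(a, b, c). B a b c) t) = sum_list (map (\<lambda>(a, b, c). B a b c) u)"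
proof -
  have mV: "module sV" using vV by (simp add: module_iff_vector_space)
  define X where "X = (\<Union>(a, b, c)\<in>set t \<union> set u. {a, b, c})"
  have "finite X" unfolding X_def by auto
  then obtain E g where lg: "\<And>e. Vector_Spaces.linear sH (*) (g e)"
    and ex: "\<And>x. x \<in> X \<Longrightarrow> x = (\<Sum>e\<in>E. sH (g e x) e)"
    by (rule vector_space.finite_coordinates[OF vH]) blast
  have expand: "(\<lambda>(a, b, c). B a b c) p = (\<Sum>e\<in>E. \<Sum>e'\<in>E. \<Sum>e''\<in>E.
      sV (g e (fst p) * g e' (fst (snd p)) * g e'' (snd (snd p))) (B e e' e''))"
    if pX: "p \<in> X \<times> X \<times> X" for p
  proof -
    obtain a b c where p: "p = (a, b, c)" "a \<in> X" "b \<in> X" "c \<in> X" using pX by auto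
    have "B a b c = (\<Sum>e\<in>E. sV (g e a) (B e b c))"
      by (rule linear_map_coordinates[OF B1 ex[OF p(2)]])
    also have "\<dots> = (\<Sum>e\<in>E. sV (g e a) (\<Sum>e'\<in>E. sV (g e' b) (B e e' c)))"
      by (simp only: linear_map_coordinates[OF B2 ex[OF p(3)]])
    also have "\<dots> = (\<Sum>e\<in>E. sV (g e a) (\<Sum>e'\<in>E. sV (g e' b) (\<Sum>e''\<in>E. sV (g e'' c) (B e e' e''))))"
      by (simp only: linear_map_coordinates[OF B3 ex[OF p(4)]])
    finally show ?thesis
      by (simp add: p(1) module.scale_sum_right[OF mV] module.scale_scale[OF mV] mult.assoc)
  qed
  have "sum_list (map (\<lambda>(a, b, c). B a b c) l)
      = (\<Sum>e\<in>E. \<Sum>e'\<in>E. \<Sum>e''\<in>E. sV (tens3 (g e) (g e') (g e'') l) (B e e' e''))"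
    if "set l \<subseteq> set t \<union> set u" for l
  proof -
    have "set l \<subseteq> X \<times> X \<times> X" using that unfolding X_def by fastforce
    then have "sum_list (map (\<lambda>(a, b, c). B a b c) l) = sum_list (map (\<lambda>p. \<Sum>e\<in>E. \<Sum>e'\<in>E. \<Sum>e''\<in>E.
        sV (g e (fst p) * g e' (fst (snd p)) * g e'' (snd (snd p))) (B e e' e'')) l)"
      by (intro arg_cong[where f = sum_list] map_cong refl expand) blast
    also have "\<dots> = (\<Sum>e\<in>E. \<Sum>e'\<in>E. \<Sum>e''\<in>E. sV (tens3 (g e) (g e') (g e'') l) (B e e' e''))"
      by (simp add: sum_list_map_sum vector_space.sum_list_scale_left[OF vV] tens3_def split_def)
    finally show ?thesis .
  qed
  then show ?thesis using t lg unfolding teq3_def by simp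
qed

lemma sum_list_coassoc_left:
  "sum_list (map (\<lambda>(x, y, z). F x y z) [(a1, a2, b). (a, b) \<leftarrow> t, (a1, a2) \<leftarrow> D a])
   = sum_list (map (\<lambda>(a, b). sum_list (map (\<lambda>(a1, a2). F a1 a2 b) (D a))) t)"
  by (induction t) (auto simp: case_prod_beta o_def)

lemma sum_list_coassoc_right:
  "sum_list (map (\<lambda>(x, y, z). F x y z) [(a, b1, b2). (a, b) \<leftarrow> t, (b1, b2) \<leftarrow> D b])
   = sum_list (map (\<lambda>(a, b). sum_list (map (\<lambda>(b1, b2). F a b1 b2) (D b))) t)"
  by (induction t) (auto simp: case_prod_beta o_def)

definition Tc_dual :: "('h::ring_1 \<Rightarrow> ('h \<times> 'h) list) \<Rightarrow> ('h \<Rightarrow> 'h)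
    \<Rightarrow> ('h \<Rightarrow> 'm \<Rightarrow> 'm) \<Rightarrow> ('m::ab_group_add \<Rightarrow> 'm) \<Rightarrow> 'h \<Rightarrow> 'm \<Rightarrow> 'm" where
  "Tc_dual \<Delta> S act T h m = sum_list (map (\<lambda>(a, b). act (S a) (T (act b m))) (\<Delta> h))"

locale T_object =
  fixes sH :: "'k::field \<Rightarrow> 'h::ring_1 \<Rightarrow> 'h" and \<Delta> :: "'h \<Rightarrow> ('h \<times> 'h) list"
    and \<epsilon> :: "'h \<Rightarrow> 'k" and S :: "'h \<Rightarrow> 'h"
    and sM :: "'k \<Rightarrow> 'm::ab_group_add \<Rightarrow> 'm" and act :: "'h \<Rightarrow> 'm \<Rightarrow> 'm"
    and T :: "'m \<Rightarrow> 'm"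
  assumes hopf: "hopf_algebra sH \<Delta> \<epsilon> S" and is_tobj: "tobj sH \<Delta> S sM (act, T)"
begin

lemma vector_space_H: "vector_space sH"
  and scale_mult: "sH c (x * y) = sH c x * y" "sH c (x * y) = x * sH c y"
  and coproduct_linear: "teq2 sH (\<Delta> (sH c x + y)) (map (\<lambda>(a, b). (sH c a, b)) (\<Delta> x) @ \<Delta> y)"
  and coassoc: "teq3 sH [(a1, a2, b). (a, b) \<leftarrow> \<Delta> h, (a1, a2) \<leftarrow> \<Delta> a]
                        [(a, b1, b2). (a, b) \<leftarrow> \<Delta> h, (b1, b2) \<leftarrow> \<Delta> b]"
  and counit_left: "sum_list (map (\<lambda>(a, b). sH (\<epsilon> a) b) (\<Delta> h)) = h"
  and counit_right: "sum_list (map (\<lambda>(a, b). sH (\<epsilon> b) a) (\<Delta> h)) = h"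
  and antipode_left: "sum_list (map (\<lambda>(a, b). S a * b) (\<Delta> h)) = sH (\<epsilon> h) 1"
  and S_linear: "Vector_Spaces.linear sH sH S"
  using hopf unfolding hopf_algebra_def by blast+

lemma vector_space_M: "vector_space sM"
  and act_linear: "Vector_Spaces.linear sM sM (act h)"
  and act_comb: "act (sH c h + k) m = sM c (act h m) + act k m"
  and act_one: "act 1 m = m"
  and act_mult: "act (h * k) m = act h (act k m)"
  and T_linear: "Vector_Spaces.linear sM sM T"
  and T_idem: "T (T m) = T m"
  and T_Tc_commute: "Tc \<Delta> S act T h (T m) = T (Tc \<Delta> S act T h m)"
  using is_tobj unfolding tobj_def hmodule_def c_condition_def by blast+

lemma act_linear_H: "Vector_Spaces.linear sH sM (\<lambda>h. act h m)"
  by (rule linear_if_combination[OF vector_space_H vector_space_M act_comb])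

lemma act_scale_H: "act (sH c h) m = sM c (act h m)"
  by (rule linear_map_scale[OF act_linear_H])

lemma mult_left_linear: "Vector_Spaces.linear sH sH (\<lambda>x. y * x)"
  using vector_space_H by (simp add: Vector_Spaces.linear_iff distrib_left scale_mult(2)[symmetric])

lemma mult_right_linear: "Vector_Spaces.linear sH sH (\<lambda>x. x * y)"
  using vector_space_H by (simp add: Vector_Spaces.linear_iff distrib_right scale_mult(1)[symmetric])

lemma coassoc_sum_list:
  assumes "\<And>y z. Vector_Spaces.linear sH sM (\<lambda>x. F x y z)"
    and "\<And>x z. Vector_Spaces.linear sH sM (\<lambda>y. F x y z)"
    and "\<And>x y. Vector_Spaces.linear sH sM (F x y)"
  shows "sum_list (map (\<lambda>(a, b). sum_list (map (\<lambda>(a1, a2). F a1 a2 b) (\<Delta> a))) (\<Delta> h))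
       = sum_list (map (\<lambda>(a, b). sum_list (map (\<lambda>(b1, b2). F a b1 b2) (\<Delta> b))) (\<Delta> h))"
  using teq3_sum_list_trilinear[OF vector_space_H vector_space_M coassoc assms, of h]
  unfolding sum_list_coassoc_left sum_list_coassoc_right .

lemma Tc_linear: "Vector_Spaces.linear sM sM (Tc \<Delta> S act T h)"
  unfolding Tc_def[abs_def]
  by (intro linear_sum_list_fun vector_space_M linear_comp[OF act_linear] linear_comp[OF T_linear] act_linear)

lemma Tc_linear_H: "Vector_Spaces.linear sH sM (\<lambda>h. Tc \<Delta> S act T h z)"
proof (rule linear_if_combination[OF vector_space_H vector_space_M])
  fix c x y
  let ?B = "\<lambda>a b. act a (T (act (S b) z))"
  have "Tc \<Delta> S act T (sH c x + y) z
      = sum_list (map (\<lambda>(a, b). ?B a b) (map (\<lambda>(a, b). (sH c a, b)) (\<Delta> x) @ \<Delta> y))"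
    unfolding Tc_def
    by (intro teq2_sum_list_bilinear[OF vector_space_H vector_space_M coproduct_linear] act_linear_H
        linear_comp[OF S_linear] linear_comp[OF act_linear_H] linear_comp[OF T_linear] act_linear)
  also have "\<dots> = sum_list (map (\<lambda>(a, b). sM c (?B a b)) (\<Delta> x)) + Tc \<Delta> S act T y z"
    by (simp add: Tc_def act_scale_H split_def o_def)
  finally show "Tc \<Delta> S act T (sH c x + y) z = sM c (Tc \<Delta> S act T x z) + Tc \<Delta> S act T y z"
    unfolding Tc_def by (simp add: vector_space.scale_sum_list[OF vector_space_M])
qed

lemma sum_S_act_act: "sum_list (map (\<lambda>(a, b). act (S a) (act b m)) (\<Delta> h)) = sM (\<epsilon> h) m"
proof -
  have "sum_list (map (\<lambda>(a, b). act (S a) (act b m)) (\<Delta> h))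
      = act (sum_list (map (\<lambda>(a, b). S a * b) (\<Delta> h))) m"
    by (simp add: linear_map_sum_list[OF act_linear_H] act_mult)
  then show ?thesis by (simp add: antipode_left act_scale_H act_one)
qed

lemma act_T_eq_sum_Tc: "act h (T m) = sum_list (map (\<lambda>(a, b). Tc \<Delta> S act T a (act b m)) (\<Delta> h))"
proof -
  let ?F = "\<lambda>x y z. act x (T (act (S y) (act z m)))"
  have "sum_list (map (\<lambda>(a, b). Tc \<Delta> S act T a (act b m)) (\<Delta> h))
      = sum_list (map (\<lambda>(a, b). sum_list (map (\<lambda>(a1, a2). ?F a1 a2 b) (\<Delta> a))) (\<Delta> h))"
    unfolding Tc_def ..
  also have "\<dots> = sum_list (map (\<lambda>(a, b). sum_list (map (\<lambda>(b1, b2). ?F a b1 b2) (\<Delta> b))) (\<Delta> h))"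
    by (intro coassoc_sum_list act_linear_H linear_comp[OF S_linear] linear_comp[OF act_linear_H]
        linear_comp[OF act_linear] linear_comp[OF T_linear] act_linear)
  also have "\<dots> = sum_list (map (\<lambda>(a, b). act (sH (\<epsilon> b) a) (T m)) (\<Delta> h))"
    by (simp add: linear_map_sum_list[OF linear_comp[OF T_linear act_linear], symmetric]
        sum_S_act_act linear_map_scale[OF T_linear] linear_map_scale[OF act_linear] act_scale_H)
  also have "\<dots> = act h (T m)"
    by (simp add: linear_map_sum_list[OF act_linear_H, symmetric] counit_right)
  finally show ?thesis ..
qed

lemma sum_S_act_Tc: "sum_list (map (\<lambda>(a, b). act (S a) (Tc \<Delta> S act T b m)) (\<Delta> h)) = T (act (S h) m)"
proof -
  let ?F = "\<lambda>x y z. act (S x * y) (T (act (S z) m))"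
  have "sum_list (map (\<lambda>(a, b). act (S a) (Tc \<Delta> S act T b m)) (\<Delta> h))
      = sum_list (map (\<lambda>(a, b). sum_list (map (\<lambda>(b1, b2). ?F a b1 b2) (\<Delta> b))) (\<Delta> h))"
    unfolding Tc_def by (simp add: linear_map_sum_list[OF act_linear] act_mult)
  also have "\<dots> = sum_list (map (\<lambda>(a, b). sum_list (map (\<lambda>(a1, a2). ?F a1 a2 b) (\<Delta> a))) (\<Delta> h))"
    by (intro coassoc_sum_list[symmetric] linear_comp[OF S_linear] linear_comp[OF mult_right_linear]
        linear_comp[OF mult_left_linear] linear_comp[OF act_linear_H] linear_comp[OF T_linear]
        act_linear act_linear_H)
  also have "\<dots> = sum_list (map (\<lambda>(a, b). T (act (S (sH (\<epsilon> a) b)) m)) (\<Delta> h))"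
    by (simp add: linear_map_sum_list[OF act_linear_H, symmetric] antipode_left act_scale_H act_one
        linear_map_scale[OF S_linear] linear_map_scale[OF T_linear])
  also have "\<dots> = T (act (S h) m)"
    by (simp add: linear_map_sum_list[OF linear_comp[OF S_linear linear_comp[OF act_linear_H T_linear]],
        symmetric] counit_left)
  finally show ?thesis .
qed

lemma Tc_dual_T_commute: "Tc_dual \<Delta> S act T h (T m) = T (Tc_dual \<Delta> S act T h m)"
proof -
  let ?F = "\<lambda>x y z. act (S x) (Tc \<Delta> S act T y (T (act z m)))"
  have "Tc_dual \<Delta> S act T h (T m) = sum_list (map (\<lambda>(a, b). act (S a) (T (act b (T m)))) (\<Delta> h))"
    unfolding Tc_dual_def ..
  also have "\<dots> = sum_list (map (\<lambda>(a, b). sum_list (map (\<lambda>(b1, b2). ?F a b1 b2) (\<Delta> b))) (\<Delta> h))"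
  proof -
    have "act (S a) (T (act b (T m))) = sum_list (map (\<lambda>(b1, b2). ?F a b1 b2) (\<Delta> b))" for a b
      by (subst act_T_eq_sum_Tc)
        (simp add: linear_map_sum_list[OF linear_comp[OF T_linear act_linear]] T_Tc_commute)
    then show ?thesis by simp
  qed
  also have "\<dots> = sum_list (map (\<lambda>(a, b). sum_list (map (\<lambda>(a1, a2). ?F a1 a2 b) (\<Delta> a))) (\<Delta> h))"
    by (intro coassoc_sum_list[symmetric] act_linear_H act_linear linear_comp[OF S_linear]
        linear_comp[OF Tc_linear_H] linear_comp[OF act_linear_H] linear_comp[OF Tc_linear]
        linear_comp[OF T_linear])
  also have "\<dots> = sum_list (map (\<lambda>(a, b). T (act (S a) (T (act b m)))) (\<Delta> h))"
    by (simp add: sum_S_act_Tc)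
  also have "\<dots> = T (Tc_dual \<Delta> S act T h m)"
    unfolding Tc_dual_def by (simp add: linear_map_sum_list[OF T_linear])
  finally show ?thesis .
qed

lemma T_Tc_fixed: "m \<in> range T \<Longrightarrow> T (Tc \<Delta> S act T h m) = Tc \<Delta> S act T h m"
  by (auto simp: T_Tc_commute[symmetric] T_idem)

lemma T_Tc_dual_fixed: "m \<in> range T \<Longrightarrow> T (Tc_dual \<Delta> S act T h m) = Tc_dual \<Delta> S act T h m"
  by (auto simp: Tc_dual_T_commute[symmetric] T_idem)

lemma partial_axiom_left:
  assumes "T (sum_list (map (\<lambda>(a, b). act (f a) (T (act (g b) m))) xs))
         = sum_list (map (\<lambda>(a, b). act (f a) (T (act (g b) m))) xs)"
  shows "sum_list (map (\<lambda>(a, b). T (act h (T (act (f a) (T (act (g b) m)))))) xs)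
       = sum_list (map (\<lambda>(a, b). T (act (h * f a) (T (act (g b) m)))) xs)"
proof -
  have "sum_list (map (\<lambda>(a, b). T (act h (T (act (f a) (T (act (g b) m)))))) xs)
      = T (act h (T (sum_list (map (\<lambda>(a, b). act (f a) (T (act (g b) m))) xs))))"
    by (simp add: linear_map_sum_list[OF linear_comp[OF linear_comp[OF T_linear act_linear] T_linear]])
  also have "\<dots> = sum_list (map (\<lambda>(a, b). T (act (h * f a) (T (act (g b) m)))) xs)"
    by (simp add: assms linear_map_sum_list[OF linear_comp[OF act_linear T_linear]] act_mult)
  finally show ?thesis .
qed

lemma partial_axiom_right:
  assumes "\<And>m. sum_list (map (\<lambda>(a, b). act (f a) (T (act (g b) (T m)))) xs)
              = T (sum_list (map (\<lambda>(a, b). act (f a) (T (act (g b) m))) xs))"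
  shows "sum_list (map (\<lambda>(a, b). T (act (f a) (T (act (g b) (T (act k m)))))) xs)
       = sum_list (map (\<lambda>(a, b). T (act (f a) (T (act (g b * k) m)))) xs)"
proof -
  have "sum_list (map (\<lambda>(a, b). T (act (f a) (T (act (g b) (T (act k m)))))) xs)
      = T (sum_list (map (\<lambda>(a, b). act (f a) (T (act (g b) (T (act k m))))) xs))"
    by (simp add: linear_map_sum_list[OF T_linear])
  also have "\<dots> = sum_list (map (\<lambda>(a, b). T (act (f a) (T (act (g b * k) m)))) xs)"
    by (simp add: assms T_idem linear_map_sum_list[OF T_linear] act_mult)
  finally show ?thesis .
qed

lemma par_module_R_obj: "par_module sH \<Delta> S sM (R_obj (act, T))"
proof -
  have "module.subspace sM (T ` UNIV)"
    using vector_space_M T_linear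
    by (simp add: module_hom.subspace_image linear_iff_module_hom module.subspace_UNIV
        module_iff_vector_space)
  moreover have "lin_on sM sM (range T) (\<lambda>m. T (act h m))" for h
    by (simp add: lin_on_def linear_map_add[OF T_linear] linear_map_add[OF act_linear]
        linear_map_scale[OF T_linear] linear_map_scale[OF act_linear])
  moreover have "T (act (sH c h + k) m) = sM c (T (act h m)) + T (act k m)" for c h k m
    by (simp add: act_comb linear_map_add[OF T_linear] linear_map_scale[OF T_linear])
  moreover have "m \<in> range T \<Longrightarrow> T (act 1 m) = m" for m
    by (auto simp: act_one T_idem)
  moreover note
    partial_axiom_left[of "\<lambda>x. x" S, OF T_Tc_fixed[unfolded Tc_def]]
    partial_axiom_right[of "\<lambda>x. x" S, OF T_Tc_commute[unfolded Tc_def]]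
    partial_axiom_left[of S "\<lambda>x. x", OF T_Tc_dual_fixed[unfolded Tc_dual_def]]
    partial_axiom_right[of S "\<lambda>x. x", OF Tc_dual_T_commute[unfolded Tc_dual_def]]
  ultimately show ?thesis
    unfolding par_module_def R_obj_def using vector_space_M by simp
qed

end

lemma par_module_R_obj:
  assumes "hopf_algebra sH \<Delta> \<epsilon> S" "tobj sH \<Delta> S sM X"
  shows "par_module sH \<Delta> S sM (R_obj X)"
  using T_object.par_module_R_obj[of sH \<Delta> \<epsilon> S sM "fst X" "snd X"] assms
  by (simp add: T_object_def)

lemma par_hom_R_obj_iff_thom: "par_hom sM sN (R_obj X) (R_obj Y) f \<longleftrightarrow> thom sM sN X Y f"
  by (simp add: par_hom_def thom_def R_obj_def)

lemma tobj_I_obj: "hmodule sH sM act \<Longrightarrow> tobj sH \<Delta> S sM (I_obj act)"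
  by (simp add: tobj_def I_obj_def c_condition_def hmodule_def vector_space.linear_id)

lemma thom_I_obj_iff_mhom:
  assumes "hmodule sH sM actM" "hmodule sH sN actN"
  shows "thom sM sN (I_obj actM) (I_obj actN) f \<longleftrightarrow> mhom sM actM sN actN f"
proof -
  have "vector_space sM" "vector_space sN" using assms by (simp_all add: hmodule_def)
  then have "lin_on sM sN UNIV f \<longleftrightarrow> Vector_Spaces.linear sM sN f"
    by (auto simp: lin_on_def linear_map_add linear_map_scale intro: linear_if_combination)
  then show ?thesis by (simp add: thom_def mhom_def I_obj_def)
qed

theorem mainTheorem8:
  fixes sH :: "'k::field \<Rightarrow> 'h::ring_1 \<Rightarrow> 'h"
    and \<Delta> :: "'h \<Rightarrow> ('h \<times> 'h) list" and \<epsilon> :: "'h \<Rightarrow> 'k" and S :: "'h \<Rightarrow> 'h"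
    and sM :: "'k \<Rightarrow> 'm::ab_group_add \<Rightarrow> 'm"
    and sN :: "'k \<Rightarrow> 'n::ab_group_add \<Rightarrow> 'n"
    and sP :: "'k \<Rightarrow> 'p::ab_group_add \<Rightarrow> 'p"
  assumes hopf: "hopf_algebra sH \<Delta> \<epsilon> S"
  shows
    \<comment> \<open>I is a functor: objects to objects, morphisms to morphisms, identities, composition\<close>
    "(\<forall>actM. hmodule sH sM actM \<longrightarrow> tobj sH \<Delta> S sM (I_obj actM)) \<and>
     (\<forall>actM actN f. hmodule sH sM actM \<longrightarrow> hmodule sH sN actN \<longrightarrow> mhom sM actM sN actN f
        \<longrightarrow> thom sM sN (I_obj actM) (I_obj actN) (I_mor f)) \<and>
     (\<forall>actM. hmodule sH sM actM \<longrightarrow> (\<forall>m\<in>range (snd (I_obj actM)). I_mor id m = m)) \<and>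
     (\<forall>actM actN actP (f :: 'm \<Rightarrow> 'n) (g :: 'n \<Rightarrow> 'p).
        hmodule sH sM actM \<longrightarrow> hmodule sH sN actN \<longrightarrow> hmodule sH sP actP \<longrightarrow>
        mhom sM actM sN actN f \<longrightarrow> mhom sN actN sP actP g \<longrightarrow>
        (\<forall>m\<in>range (snd (I_obj actM)). I_mor (g \<circ> f) m = (I_mor g \<circ> I_mor f) m)) \<and>
     \<comment> \<open>I is full and faithful\<close>
     (\<forall>actM actN. hmodule sH sM actM \<longrightarrow> hmodule sH sN actN \<longrightarrow>
        (\<forall>g. thom sM sN (I_obj actM) (I_obj actN) g \<longrightarrow>
             (\<exists>f. mhom sM actM sN actN f \<and> (\<forall>m\<in>range (snd (I_obj actM)). I_mor f m = g m))) \<and>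
        (\<forall>f1 f2. mhom sM actM sN actN f1 \<longrightarrow> mhom sM actM sN actN f2 \<longrightarrow>
             (\<forall>m\<in>range (snd (I_obj actM)). I_mor f1 m = I_mor f2 m) \<longrightarrow> f1 = f2)) \<and>
     \<comment> \<open>R is a functor\<close>
     (\<forall>X. tobj sH \<Delta> S sM X \<longrightarrow> par_module sH \<Delta> S sM (R_obj X)) \<and>
     (\<forall>X Y f. tobj sH \<Delta> S sM X \<longrightarrow> tobj sH \<Delta> S sN Y \<longrightarrow> thom sM sN X Y f
        \<longrightarrow> par_hom sM sN (R_obj X) (R_obj Y) (R_mor f)) \<and>
     (\<forall>X. tobj sH \<Delta> S sM X \<longrightarrow> (\<forall>m\<in>fst (R_obj X). R_mor id m = m)) \<and>
     (\<forall>X Y Z (f :: 'm \<Rightarrow> 'n) (g :: 'n \<Rightarrow> 'p).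
        tobj sH \<Delta> S sM X \<longrightarrow> tobj sH \<Delta> S sN Y \<longrightarrow> tobj sH \<Delta> S sP Z \<longrightarrow>
        thom sM sN X Y f \<longrightarrow> thom sN sP Y Z g \<longrightarrow>
        (\<forall>m\<in>fst (R_obj X). R_mor (g \<circ> f) m = (R_mor g \<circ> R_mor f) m)) \<and>
     \<comment> \<open>R is full and faithful\<close>
     (\<forall>X Y. tobj sH \<Delta> S sM X \<longrightarrow> tobj sH \<Delta> S sN Y \<longrightarrow>
        (\<forall>g. par_hom sM sN (R_obj X) (R_obj Y) g \<longrightarrow>
             (\<exists>f. thom sM sN X Y f \<and> (\<forall>m\<in>fst (R_obj X). R_mor f m = g m))) \<and>
        (\<forall>f1 f2. thom sM sN X Y f1 \<longrightarrow> thom sM sN X Y f2 \<longrightarrow>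
             (\<forall>m\<in>fst (R_obj X). R_mor f1 m = R_mor f2 m) \<longrightarrow>
             (\<forall>m\<in>range (snd X). f1 m = f2 m))) \<and>
     \<comment> \<open>the inclusion i equals R \<circ> I\<close>
     (\<forall>actM. hmodule sH sM actM \<longrightarrow> R_obj (I_obj actM) = i_obj actM) \<and>
     (\<forall>f :: 'm \<Rightarrow> 'n. R_mor (I_mor f) = i_mor f)"
proof -
  have "snd (I_obj act) = id" "R_obj (I_obj act) = i_obj act" for act :: "'h \<Rightarrow> 'm \<Rightarrow> 'm"
    by (simp_all add: I_obj_def R_obj_def i_obj_def)
  moreover have "fst (R_obj X) = range (snd X)" for X :: "('h \<Rightarrow> 'm \<Rightarrow> 'm) \<times> ('m \<Rightarrow> 'm)"
    by (simp add: R_obj_def)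
  ultimately show ?thesis
    by (auto simp: tobj_I_obj thom_I_obj_iff_mhom par_module_R_obj[OF hopf] par_hom_R_obj_iff_thom
        I_mor_def R_mor_def i_mor_def fun_eq_iff)
qed

end
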